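(* Let $(X,T)$ be a minimal Cantor system with a sequence of CKR partitions satisfying (KR1)–(KR6), and let $\lambda=\exp(2i\pi\alpha)$ with $\alpha\in\mathbb R$. Then $\lambda$ is a continuous eigenvalue of $(X,T)$ if and only if $(\lambda^{r_n(x)})_{n\ge1}$ converges uniformly in $x\in X$ (equivalently, $(\alpha r_n(x))_{n\ge1}$ converges modulo $\mathbb Z$ uniformly in $x$).
   Context: CKR partitions $\mathcal P(n)=\{T^{-j}B_k(n):1\le k\le C(n),0\le j<h_k(n)\}$ (partitions of $X$, $B_k(n)$ clopen) with $\mathcal P(0)$ trivial, roof $B(n)=\bigcup_kB_k(n)$. (KR1) $B(n+1)\subseteq B(n)$; (KR2) $\mathcal P(n+1)$ refines $\mathcal P(n)$; (KR3) $\bigcap_nB(n)$ is a single point; (KR4) the partitions generate the topology; (KR5) for all $n\ge1$, $k\le C(n-1)$, $l\le C(n)$ some $0\le j<h_l(n)$ has $T^{-j}B_l(n)\subseteq B_k(n-1)$; (KR6) $B(n)\subseteq B_1(n-1)$ for $n\ge1$. $r_n(x)=\min\{j\ge0:T^jx\in B(n)\}$. A continuous eigenvalue is $\lambda$ with $f\circ T=\lambda f$ for some continuous nonzero $f:X\to\mathbb C$. *)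

theory Defs
  imports "HOL-Analysis.Analysis"
begin

definition cantor_space :: "'a::metric_space set \<Rightarrow> bool" where
  "cantor_space X \<longleftrightarrow> X \<noteq> {} \<and> compact X \<and> (\<forall>x\<in>X. x islimpt X)
     \<and> (\<forall>x\<in>X. connected_component_set X x = {x})"

definition self_homeo :: "'a::metric_space set \<Rightarrow> ('a \<Rightarrow> 'a) \<Rightarrow> bool" where
  "self_homeo X T \<longleftrightarrow> homeomorphism X X T (inv_into X T)"

definition minimal_system :: "'a::metric_space set \<Rightarrow> ('a \<Rightarrow> 'a) \<Rightarrow> bool" where
  "minimal_system X T \<longleftrightarrow>
     (\<forall>Y. Y \<subseteq> X \<and> closed Y \<and> Y \<noteq> {} \<and> T ` Y = Y \<longrightarrow> Y = X)"

definition minimal_cantor_system :: "'a::metric_space set \<Rightarrow> ('a \<Rightarrow> 'a) \<Rightarrow> bool" where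
  "minimal_cantor_system X T \<longleftrightarrow> cantor_space X \<and> self_homeo X T \<and> minimal_system X T"

definition preim_pow :: "'a set \<Rightarrow> ('a \<Rightarrow> 'a) \<Rightarrow> nat \<Rightarrow> 'a set \<Rightarrow> 'a set" where
  "preim_pow X T j A = {x \<in> X. (T ^^ j) x \<in> A}"

definition ckr_index :: "(nat \<Rightarrow> nat) \<Rightarrow> (nat \<Rightarrow> nat \<Rightarrow> nat) \<Rightarrow> nat \<Rightarrow> (nat \<times> nat) set" where
  "ckr_index C h n = {(k, j). 1 \<le> k \<and> k \<le> C n \<and> j < h n k}"

text \<open>Atom $T^{-j}B_k(n)$; here \<open>B n k\<close> stands for $B_k(n)$ and \<open>h n k\<close> for $h_k(n)$.\<close>
definition ckr_atom :: "'a set \<Rightarrow> ('a \<Rightarrow> 'a) \<Rightarrow> (nat \<Rightarrow> nat \<Rightarrow> 'a set) \<Rightarrow> nat \<Rightarrow> nat \<times> nat \<Rightarrow> 'a set" where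
  "ckr_atom X T B n kj = preim_pow X T (snd kj) (B n (fst kj))"

definition ckr_roof :: "(nat \<Rightarrow> nat) \<Rightarrow> (nat \<Rightarrow> nat \<Rightarrow> 'a set) \<Rightarrow> nat \<Rightarrow> 'a set" where
  "ckr_roof C B n = (\<Union>k\<in>{1..C n}. B n k)"

definition ckr_partition ::
  "'a::metric_space set \<Rightarrow> ('a \<Rightarrow> 'a) \<Rightarrow> (nat \<Rightarrow> nat) \<Rightarrow> (nat \<Rightarrow> nat \<Rightarrow> nat) \<Rightarrow> (nat \<Rightarrow> nat \<Rightarrow> 'a set) \<Rightarrow> nat \<Rightarrow> bool" where
  "ckr_partition X T C h B n \<longleftrightarrow>
     1 \<le> C n \<and>
     (\<forall>k\<in>{1..C n}. B n k \<subseteq> X \<and> B n k \<noteq> {} \<and> openin (top_of_set X) (B n k)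
        \<and> closedin (top_of_set X) (B n k) \<and> 1 \<le> h n k) \<and>
     (\<forall>p\<in>ckr_index C h n. \<forall>q\<in>ckr_index C h n. p \<noteq> q \<longrightarrow> ckr_atom X T B n p \<inter> ckr_atom X T B n q = {}) \<and>
     (\<Union>p\<in>ckr_index C h n. ckr_atom X T B n p) = X"

definition ckr_sequence ::
  "'a::metric_space set \<Rightarrow> ('a \<Rightarrow> 'a) \<Rightarrow> (nat \<Rightarrow> nat) \<Rightarrow> (nat \<Rightarrow> nat \<Rightarrow> nat) \<Rightarrow> (nat \<Rightarrow> nat \<Rightarrow> 'a set) \<Rightarrow> bool" where
  "ckr_sequence X T C h B \<longleftrightarrow>
     (\<forall>n. ckr_partition X T C h B n) \<and>
     \<comment> \<open>P(0) trivial\<close>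
     C 0 = 1 \<and> h 0 1 = 1 \<and> B 0 1 = X \<and>
     \<comment> \<open>(KR1)\<close>
     (\<forall>n. ckr_roof C B (Suc n) \<subseteq> ckr_roof C B n) \<and>
     \<comment> \<open>(KR2)\<close>
     (\<forall>n. \<forall>p\<in>ckr_index C h (Suc n). \<exists>q\<in>ckr_index C h n.
          ckr_atom X T B (Suc n) p \<subseteq> ckr_atom X T B n q) \<and>
     \<comment> \<open>(KR3)\<close>
     (\<exists>x. (\<Inter>n. ckr_roof C B n) = {x}) \<and>
     \<comment> \<open>(KR4): the atoms form a basis of the topology of X\<close>
     (\<forall>U x. openin (top_of_set X) U \<and> x \<in> U \<longrightarrow>
        (\<exists>n. \<exists>p\<in>ckr_index C h n. x \<in> ckr_atom X T B n p \<and> ckr_atom X T B n p \<subseteq> U)) \<and>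
     \<comment> \<open>(KR5)\<close>
     (\<forall>n\<ge>1. \<forall>k\<in>{1..C (n-1)}. \<forall>l\<in>{1..C n}. \<exists>j<h n l.
          preim_pow X T j (B n l) \<subseteq> B (n-1) k) \<and>
     \<comment> \<open>(KR6)\<close>
     (\<forall>n\<ge>1. ckr_roof C B n \<subseteq> B (n-1) 1)"

definition ckr_return :: "('a \<Rightarrow> 'a) \<Rightarrow> (nat \<Rightarrow> nat) \<Rightarrow> (nat \<Rightarrow> nat \<Rightarrow> 'a set) \<Rightarrow> nat \<Rightarrow> 'a \<Rightarrow> nat" where
  "ckr_return T C B n x = (LEAST j. (T ^^ j) x \<in> ckr_roof C B n)"

definition continuous_eigenvalue :: "'a::metric_space set \<Rightarrow> ('a \<Rightarrow> 'a) \<Rightarrow> complex \<Rightarrow> bool" where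
  "continuous_eigenvalue X T lam \<longleftrightarrow>
     (\<exists>f :: 'a \<Rightarrow> complex. continuous_on X f \<and> (\<exists>x\<in>X. f x \<noteq> 0) \<and>
        (\<forall>x\<in>X. f (T x) = lam * f x))"

definition dist_Z :: "real \<Rightarrow> real" where
  "dist_Z t = \<bar>t - round t\<bar>"

definition unif_conv_mod_Z :: "'a set \<Rightarrow> (nat \<Rightarrow> 'a \<Rightarrow> real) \<Rightarrow> bool" where
  "unif_conv_mod_Z X g \<longleftrightarrow>
     (\<exists>l. \<forall>e>0. \<exists>N. \<forall>n\<ge>N. \<forall>x\<in>X. dist_Z (g n x - l x) < e)"

end

theory Submission
  imports Defs
begin

text \<open>
  The function \<open>r\<^sub>n\<close> is constant on the clopen atoms of \<open>\<P>(n)\<close>, hence continuous; it satisfies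
  \<open>r\<^sub>n(x) = r\<^sub>n(T x) + 1\<close> off \<open>B(n)\<close>; and the roofs shrink to a single point \<open>x\<^sub>0\<close>.
  \<^item> If \<open>f\<close> is a continuous eigenfunction, \<open>|f|\<close> is constant by minimality and
    \<open>\<lambda>\<^bsup>r\<^sub>n(x)\<^esup> = f(T\<^bsup>r\<^sub>n(x)\<^esup>x) / f(x)\<close> with \<open>T\<^bsup>r\<^sub>n(x)\<^esup>x \<in> B(n)\<close> near \<open>x\<^sub>0\<close>; uniform continuity
    of \<open>f\<close> gives uniform convergence to \<open>f(x\<^sub>0)/f\<close>.
  \<^item> Conversely the uniform limit \<open>g\<close> of \<open>\<lambda>\<^bsup>r\<^sub>n\<^esup>\<close> is continuous, unimodular, and \<open>g(T x) \<lambda> = g(x)\<close>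
    off \<open>x\<^sub>0\<close>, hence everywhere as \<open>X\<close> is perfect; so \<open>1/g\<close> is an eigenfunction.
  \<^item> Convergence of \<open>e\<^bsup>2\<pi>ia\<^sub>n\<^esup>\<close> is convergence of \<open>a\<^sub>n\<close> modulo \<open>\<int>\<close>, by
    \<open>2 sin(\<pi> \<parallel>t\<parallel>) = |e\<^bsup>2\<pi>it\<^esup> - 1| \<le> 2\<pi> \<parallel>t\<parallel>\<close>, where \<open>\<parallel>t\<parallel>\<close> is the distance to \<open>\<int>\<close>.
\<close>

subsection \<open>The circle and distance to the integers\<close>

lemma exp_two_pi_eq_cis:
  "exp (2 * complex_of_real pi * \<i> * complex_of_real t) = cis (2 * pi * t)"
  by (simp add: cis_conv_exp mult_ac)

lemma dist_Z_bounds: "0 \<le> dist_Z t" "dist_Z t \<le> 1/2"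
  using of_int_round_ge[of t] of_int_round_le[of t] unfolding dist_Z_def by (auto simp: abs_if)

lemma norm_cis_minus_one: "norm (cis a - 1) = 2 * \<bar>sin (a/2)\<bar>"
proof -
  have "(norm (cis a - 1))\<^sup>2 = (cos a - 1)\<^sup>2 + (sin a)\<^sup>2"
    by (simp add: cmod_power2)
  also have "\<dots> = 2 - 2 * cos a"
    by (simp add: power2_eq_square algebra_simps sin_squared_eq)
  also have "cos a = 1 - 2 * (sin (a/2))\<^sup>2"
    using cos_double_sin[of "a/2"] by simp
  also have "2 - 2 * (1 - 2 * (sin (a/2))\<^sup>2) = (2 * \<bar>sin (a/2)\<bar>)\<^sup>2"
    by (simp add: power2_eq_square)
  finally show ?thesis
    by (rule power2_eq_imp_eq) simp_all
qed

lemma norm_cis_minus_one_dist_Z: "norm (cis (2*pi*t) - 1) = 2 * sin (pi * dist_Z t)"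
proof -
  define d where "d = t - round t"
  have "cis (2*pi*t) = cis (2*pi*d) * cis (2*pi * of_int (round t))"
    by (simp add: d_def cis_mult algebra_simps)
  also have "cis (2*pi * of_int (round t)) = 1"
    by (rule cis_multiple_2pi) simp
  finally have "norm (cis (2*pi*t) - 1) = 2 * \<bar>sin (pi * d)\<bar>"
    using norm_cis_minus_one[of "2*pi*d"] by simp
  also have "\<bar>sin (pi * d)\<bar> = sin (pi * \<bar>d\<bar>)"
  proof -
    have "\<bar>d\<bar> \<le> 1/2" using dist_Z_bounds[of t] by (simp add: dist_Z_def d_def)
    hence "0 \<le> sin (pi * \<bar>d\<bar>)" by (intro sin_ge_zero) auto
    thus ?thesis by (cases "0 \<le> d") (auto simp: sin_minus)
  qed
  finally show ?thesis by (simp add: dist_Z_def d_def)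
qed

lemma norm_cis_minus_one_le: "norm (cis (2*pi*t) - 1) \<le> 2 * pi * dist_Z t"
  using norm_cis_minus_one_dist_Z[of t] sin_x_le_x[of "pi * dist_Z t"] dist_Z_bounds[of t]
  by simp

lemma norm_cis_minus_one_ge:
  assumes "0 < e" "e \<le> 1/2" "e \<le> dist_Z t"
  shows "2 * sin (pi * e) \<le> norm (cis (2*pi*t) - 1)"
proof -
  have "sin (pi * e) \<le> sin (pi * dist_Z t)"
    using assms dist_Z_bounds[of t] pi_gt_zero
    by (subst sin_mono_le_eq) (auto simp: field_simps intro: order.trans[of "-pi" 0])
  thus ?thesis using norm_cis_minus_one_dist_Z[of t] by simp
qed

lemma dist_cis: "dist (cis a) (cis b) = norm (cis (a - b) - 1)"
proof -
  have "cis a - cis b = cis b * (cis (a - b) - 1)"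
    by (simp add: algebra_simps cis_mult)
  thus ?thesis by (simp add: dist_norm norm_mult)
qed

lemma uniform_limit_unimodular:
  assumes "uniform_limit X f g sequentially" "\<And>n x. x \<in> X \<Longrightarrow> norm (f n x :: complex) = 1"
    and "x \<in> X"
  shows "norm (g x) = 1"
proof -
  have "((\<lambda>n. norm (f n x)) \<longlongrightarrow> norm (g x)) sequentially"
    by (intro tendsto_norm tendsto_uniform_limitI[OF assms(1,3)])
  moreover have "(\<lambda>n. norm (f n x)) = (\<lambda>n. 1)" using assms(2,3) by simp
  ultimately show ?thesis using LIMSEQ_unique tendsto_const by metis
qed

lemma unif_conv_mod_Z_if_cis_convergent:
  assumes "uniformly_convergent_on X (\<lambda>n x. cis (2 * pi * a n x))"
  shows "unif_conv_mod_Z X a"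
proof -
  obtain l where lim: "uniform_limit X (\<lambda>n x. cis (2 * pi * a n x)) l sequentially"
    using assms unfolding uniformly_convergent_on_def by blast
  define \<beta> where "\<beta> x = Arg (l x) / (2*pi)" for x
  have l_cis: "l x = cis (2 * pi * \<beta> x)" if "x \<in> X" for x
  proof -
    have norm_l: "norm (l x) = 1" by (rule uniform_limit_unimodular[OF lim _ that]) simp
    hence "cis (Arg (l x)) = sgn (l x)" by (intro cis_Arg) auto
    also have "sgn (l x) = l x" using norm_l by (simp add: sgn_div_norm)
    finally show ?thesis by (simp add: \<beta>_def)
  qed
  show ?thesis
    unfolding unif_conv_mod_Z_def
  proof (intro exI[of _ \<beta>] allI impI)
    fix e :: real assume "e > 0"
    define e' where "e' = min e (1/2)"
    have e': "0 < e'" "e' \<le> 1/2" "e' \<le> e" using \<open>e > 0\<close> by (auto simp: e'_def)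
    have "0 < 2 * sin (pi * e')" using e' by (simp add: sin_gt_zero)
    with lim obtain N where
      N: "\<And>n x. n \<ge> N \<Longrightarrow> x \<in> X \<Longrightarrow> dist (cis (2 * pi * a n x)) (l x) < 2 * sin (pi * e')"
      unfolding uniform_limit_iff eventually_sequentially by blast
    have "dist_Z (a n x - \<beta> x) < e" if "n \<ge> N" "x \<in> X" for n x
    proof (rule ccontr)
      assume "\<not> ?thesis"
      hence "2 * sin (pi * e') \<le> norm (cis (2 * pi * (a n x - \<beta> x)) - 1)"
        using e' by (intro norm_cis_minus_one_ge) auto
      moreover have "dist (cis (2 * pi * a n x)) (l x) = norm (cis (2 * pi * (a n x - \<beta> x)) - 1)"
        using l_cis[OF \<open>x \<in> X\<close>] by (simp add: dist_cis algebra_simps)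
      ultimately show False using N[OF that] by simp
    qed
    thus "\<exists>N. \<forall>n\<ge>N. \<forall>x\<in>X. dist_Z (a n x - \<beta> x) < e" by blast
  qed
qed

lemma cis_convergent_if_unif_conv_mod_Z:
  assumes "unif_conv_mod_Z X a"
  shows "uniformly_convergent_on X (\<lambda>n x. cis (2 * pi * a n x))"
proof -
  obtain \<beta> where lim: "\<And>e. e > 0 \<Longrightarrow> \<exists>N. \<forall>n\<ge>N. \<forall>x\<in>X. dist_Z (a n x - \<beta> x) < e"
    using assms unfolding unif_conv_mod_Z_def by blast
  have "uniform_limit X (\<lambda>n x. cis (2 * pi * a n x)) (\<lambda>x. cis (2 * pi * \<beta> x)) sequentially"
    unfolding uniform_limit_iff eventually_sequentially
  proof (intro allI impI)
    fix e :: real assume "e > 0"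
    then obtain N where N: "\<forall>n\<ge>N. \<forall>x\<in>X. dist_Z (a n x - \<beta> x) < e / (2*pi)"
      using lim[of "e / (2*pi)"] by auto
    have "dist (cis (2 * pi * a n x)) (cis (2 * pi * \<beta> x)) < e" if "n \<ge> N" "x \<in> X" for n x
    proof -
      have "dist (cis (2 * pi * a n x)) (cis (2 * pi * \<beta> x)) = norm (cis (2*pi*(a n x - \<beta> x)) - 1)"
        by (simp add: dist_cis algebra_simps)
      also have "\<dots> \<le> 2 * pi * dist_Z (a n x - \<beta> x)"
        by (rule norm_cis_minus_one_le)
      also have "\<dots> < e" using N that by (simp add: field_simps)
      finally show ?thesis .
    qed
    thus "\<exists>N. \<forall>n\<ge>N. \<forall>x\<in>X. dist (cis (2 * pi * a n x)) (cis (2 * pi * \<beta> x)) < e" by blast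
  qed
  thus ?thesis unfolding uniformly_convergent_on_def by blast
qed

lemma cis_convergent_iff_unif_conv_mod_Z:
  "uniformly_convergent_on X (\<lambda>n x. cis (2 * pi * a n x)) \<longleftrightarrow> unif_conv_mod_Z X a"
  using unif_conv_mod_Z_if_cis_convergent cis_convergent_if_unif_conv_mod_Z by blast

subsection \<open>Topological and dynamical facts\<close>

lemma continuous_on_locally_constant:
  assumes "\<And>x. x \<in> S \<Longrightarrow> \<exists>U. openin (top_of_set S) U \<and> x \<in> U \<and> (\<forall>y\<in>U. f y = f x)"
  shows "continuous_on S f"
  unfolding continuous_on_def
proof
  fix x assume "x \<in> S"
  then obtain U where U: "openin (top_of_set S) U" "x \<in> U" "\<forall>y\<in>U. f y = f x"
    using assms by blast
  show "(f \<longlongrightarrow> f x) (at x within S)"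
    by (rule Lim_transform_within_openin[OF tendsto_const U(1,2)]) (use U(3) in auto)
qed

lemma continuous_on_eq_at_limit_point:
  fixes f g :: "'a::metric_space \<Rightarrow> 'b::t2_space"
  assumes "continuous_on X f" "continuous_on X g" "x0 \<in> X" "x0 islimpt X"
    and "\<And>x. x \<in> X \<Longrightarrow> x \<noteq> x0 \<Longrightarrow> f x = g x"
  shows "f x0 = g x0"
proof (rule tendsto_unique)
  show "at x0 within X \<noteq> bot" using assms(4) by (simp add: trivial_limit_within)
  show "(g \<longlongrightarrow> g x0) (at x0 within X)"
    using assms(2,3) by (simp add: continuous_on_def)
  show "(g \<longlongrightarrow> f x0) (at x0 within X)"
  proof (rule Lim_transform_within[of f _ _ _ 1])
    show "(f \<longlongrightarrow> f x0) (at x0 within X)"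
      using assms(1,3) by (simp add: continuous_on_def)
    show "f x = g x" if "x \<in> X" "0 < dist x x0" for x
      using assms(5) that by simp
  qed simp
qed

lemma closed_decseq_shrinks_to_point:
  fixes S :: "nat \<Rightarrow> 'a::metric_space set"
  assumes "compact X" "\<And>n. S n \<subseteq> X" "\<And>n. closed (S n)" "decseq S"
    and "(\<Inter>n. S n) = {x0}" "d > 0"
  shows "\<exists>N. \<forall>n\<ge>N. S n \<subseteq> ball x0 d"
proof (rule ccontr)
  assume never_inside: "\<not> ?thesis"
  have far: "\<exists>y\<in>S N. y \<notin> ball x0 d" for N
  proof -
    obtain n where "n \<ge> N" "\<not> S n \<subseteq> ball x0 d" using never_inside by blast
    thus ?thesis using decseqD[OF assms(4) \<open>n \<ge> N\<close>] by blast
  qed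
  have "X \<inter> (\<Inter>n\<in>UNIV. S n - ball x0 d) \<noteq> {}"
  proof (rule compact_imp_fip_image[OF assms(1)])
    show "closed (S n - ball x0 d)" for n using assms(3) by (simp add: closed_Diff)
  next
    fix I :: "nat set" assume "finite I"
    obtain y where y: "y \<in> S (Max (insert 0 I))" "y \<notin> ball x0 d" using far by blast
    have "y \<in> S i" if "i \<in> I" for i
    proof -
      have "i \<le> Max (insert 0 I)" using \<open>finite I\<close> that by simp
      thus ?thesis using y(1) decseqD[OF assms(4)] by blast
    qed
    moreover have "y \<in> X" using y(1) assms(2) by blast
    ultimately have "y \<in> X \<inter> (\<Inter>i\<in>I. S i - ball x0 d)" using y(2) by blast
    thus "X \<inter> (\<Inter>i\<in>I. S i - ball x0 d) \<noteq> {}" by blast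
  qed
  then obtain z where z: "z \<in> (\<Inter>n. S n)" "z \<notin> ball x0 d" by blast
  hence "z = x0" using assms(5) by simp
  thus False using z(2) assms(6) by simp
qed

text \<open>In a minimal system on a closed set every continuous invariant real function is
  constant: each of its level sets is closed, nonempty and invariant.\<close>

lemma minimal_invariant_function_constant:
  fixes \<phi> :: "'a::metric_space \<Rightarrow> real"
  assumes "closed X" "T ` X = X" "minimal_system X T" "continuous_on X \<phi>"
    and "\<And>x. x \<in> X \<Longrightarrow> \<phi> (T x) = \<phi> x" "x \<in> X" "y \<in> X"
  shows "\<phi> x = \<phi> y"
proof -
  define Y where "Y = {z \<in> X. \<phi> z = \<phi> x}"
  have "T ` Y = Y"
  proof
    show "T ` Y \<subseteq> Y" using assms(2,5) unfolding Y_def by auto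
    show "Y \<subseteq> T ` Y"
    proof
      fix y assume "y \<in> Y"
      then obtain z where "z \<in> X" "y = T z" using assms(2) unfolding Y_def by blast
      thus "y \<in> T ` Y" using \<open>y \<in> Y\<close> assms(5) unfolding Y_def by auto
    qed
  qed
  moreover have "closed Y"
    unfolding Y_def by (rule continuous_closed_preimage_constant[OF assms(4,1)])
  ultimately have "Y = X"
    using assms(3,6) unfolding minimal_system_def Y_def by blast
  hence "y \<in> Y" using assms(7) by simp
  thus ?thesis unfolding Y_def by simp
qed

subsection \<open>Return times of a CKR sequence\<close>

locale ckr_system =
  fixes X :: "'a::metric_space set" and T :: "'a \<Rightarrow> 'a"
    and C :: "nat \<Rightarrow> nat" and h :: "nat \<Rightarrow> nat \<Rightarrow> nat" and B :: "nat \<Rightarrow> nat \<Rightarrow> 'a set"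
  assumes minimal_cantor: "minimal_cantor_system X T"
    and ckr: "ckr_sequence X T C h B"
begin

abbreviation roof :: "nat \<Rightarrow> 'a set" where "roof n \<equiv> ckr_roof C B n"
abbreviation ret :: "nat \<Rightarrow> 'a \<Rightarrow> nat" where "ret n x \<equiv> ckr_return T C B n x"

lemma compact_X: "compact X"
  and perfect_X: "x \<in> X \<Longrightarrow> x islimpt X"
  using minimal_cantor unfolding minimal_cantor_system_def cantor_space_def by auto

lemma T_onto: "T ` X = X"
  and T_continuous: "continuous_on X T"
  using minimal_cantor unfolding minimal_cantor_system_def self_homeo_def homeomorphism_def
  by auto

lemma closed_X: "closed X"
  using compact_X by (rule compact_imp_closed)

lemma minimal: "minimal_system X T"
  using minimal_cantor unfolding minimal_cantor_system_def by blast

lemma funpow_in_X: "x \<in> X \<Longrightarrow> (T ^^ j) x \<in> X"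
  using T_onto by (induction j) auto

lemma funpow_continuous: "continuous_on X (T ^^ j)"
proof (induction j)
  case (Suc j)
  have "continuous_on X (T \<circ> (T ^^ j))"
    by (rule continuous_on_compose[OF Suc continuous_on_subset[OF T_continuous]])
       (use funpow_in_X in blast)
  thus ?case by simp
qed (simp add: continuous_on_id)

lemma partitions: "\<forall>n. ckr_partition X T C h B n"
  using ckr unfolding ckr_sequence_def by (elim conjE) assumption

lemma roof_Suc: "\<forall>n. roof (Suc n) \<subseteq> roof n"
  using ckr unfolding ckr_sequence_def by (elim conjE) assumption

lemma roof_Inter_singleton: "\<exists>x. (\<Inter>n. roof n) = {x}"
  using ckr unfolding ckr_sequence_def by (elim conjE) assumption

lemma bases_clopen:
  "\<forall>k\<in>{1..C n}. B n k \<subseteq> X \<and> B n k \<noteq> {} \<and> openin (top_of_set X) (B n k)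
      \<and> closedin (top_of_set X) (B n k) \<and> 1 \<le> h n k"
  using spec[OF partitions, of n] unfolding ckr_partition_def by (elim conjE) assumption

lemma atoms_pairwise_disjoint:
  "\<forall>p\<in>ckr_index C h n. \<forall>q\<in>ckr_index C h n. p \<noteq> q \<longrightarrow>
      ckr_atom X T B n p \<inter> ckr_atom X T B n q = {}"
  using spec[OF partitions, of n] unfolding ckr_partition_def by (elim conjE) assumption

lemma atoms_Union: "(\<Union>p\<in>ckr_index C h n. ckr_atom X T B n p) = X"
  using spec[OF partitions, of n] unfolding ckr_partition_def by (elim conjE) assumption

lemma base_props:
  assumes "k \<in> {1..C n}"
  shows "B n k \<subseteq> X" "openin (top_of_set X) (B n k)" "closedin (top_of_set X) (B n k)"
    "1 \<le> h n k"
  using bspec[OF bases_clopen assms] by simp_all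

lemma atoms_disjoint:
  "p \<in> ckr_index C h n \<Longrightarrow> q \<in> ckr_index C h n \<Longrightarrow> p \<noteq> q \<Longrightarrow>
    ckr_atom X T B n p \<inter> ckr_atom X T B n q = {}"
  using atoms_pairwise_disjoint by blast

lemma atoms_cover:
  assumes "x \<in> X"
  obtains k j where "(k, j) \<in> ckr_index C h n" "x \<in> ckr_atom X T B n (k, j)"
proof -
  obtain p where "p \<in> ckr_index C h n" "x \<in> ckr_atom X T B n p"
    using atoms_Union[of n] assms by blast
  thus thesis using that by (cases p) simp
qed

lemma roof_decseq: "decseq roof"
  using roof_Suc by (intro decseq_SucI) blast

lemma roof_subset: "roof n \<subseteq> X"
  unfolding ckr_roof_def using base_props(1) by blast

lemma roof_closed: "closed (roof n)"
  unfolding ckr_roof_def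
  using base_props(3) closedin_closed_trans closed_X by blast

definition roof_point :: 'a where "roof_point = (SOME x. (\<Inter>n. roof n) = {x})"

lemma roof_Inter: "(\<Inter>n. roof n) = {roof_point}"
  unfolding roof_point_def using roof_Inter_singleton by (rule someI_ex)

lemma roof_point_in_X: "roof_point \<in> X"
  using roof_Inter roof_subset by blast

lemma roofs_shrink: "d > 0 \<Longrightarrow> \<exists>N. \<forall>n\<ge>N. roof n \<subseteq> ball roof_point d"
  by (rule closed_decseq_shrinks_to_point[OF compact_X roof_subset roof_closed roof_decseq roof_Inter])

text \<open>The return time is well defined, since the atoms cover \<open>X\<close>.\<close>

lemma ret_in_roof:
  assumes "x \<in> X" shows "(T ^^ ret n x) x \<in> roof n"
proof -
  obtain k j where kj: "(k, j) \<in> ckr_index C h n" "x \<in> ckr_atom X T B n (k, j)"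
    using assms by (rule atoms_cover)
  hence "(T ^^ j) x \<in> roof n"
    unfolding ckr_index_def ckr_atom_def preim_pow_def ckr_roof_def by auto
  thus ?thesis unfolding ckr_return_def by (rule LeastI)
qed

lemma ret_le: "(T ^^ j) x \<in> roof n \<Longrightarrow> ret n x \<le> j"
  unfolding ckr_return_def by (rule Least_le)

lemma ret_off_roof:
  assumes x: "x \<in> X" and off: "x \<notin> roof n"
  shows "ret n x = Suc (ret n (T x))"
proof -
  have "(T ^^ ret n x) x \<in> roof n" by (rule ret_in_roof[OF x])
  then obtain i where i: "ret n x = Suc i" "(T ^^ i) (T x) \<in> roof n"
    using off by (cases "ret n x") (auto simp: funpow_swap1)
  have "T x \<in> X" using T_onto x by blast
  hence "(T ^^ Suc (ret n (T x))) x \<in> roof n"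
    using ret_in_roof by (simp only: funpow_Suc_right comp_def)
  hence "ret n x \<le> Suc (ret n (T x))" by (rule ret_le)
  moreover have "ret n (T x) \<le> i" using i(2) by (rule ret_le)
  ultimately show ?thesis using i(1) by simp
qed

text \<open>On the atom \<open>T\<^sup>-\<^sup>jB\<^sub>k(n)\<close> the return time is \<open>j\<close>: an earlier visit to the roof would put
  the point in two distinct atoms.\<close>

lemma ret_on_atom:
  assumes kj: "(k, j) \<in> ckr_index C h n" and x: "x \<in> ckr_atom X T B n (k, j)"
  shows "ret n x = j"
proof (rule antisym)
  have xX: "x \<in> X" and xB: "(T ^^ j) x \<in> B n k"
    using x unfolding ckr_atom_def preim_pow_def by auto
  have k: "k \<in> {1..C n}" "j < h n k" using kj unfolding ckr_index_def by auto
  show "ret n x \<le> j" using xB k(1) by (intro ret_le) (auto simp: ckr_roof_def)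
  show "j \<le> ret n x"
  proof (rule ccontr)
    assume "\<not> j \<le> ret n x"
    define i where "i = ret n x"
    define y where "y = (T ^^ i) x"
    have lt: "i < j" using \<open>\<not> j \<le> ret n x\<close> by (simp add: i_def)
    have yX: "y \<in> X" unfolding y_def by (rule funpow_in_X[OF xX])
    obtain l where l: "l \<in> {1..C n}" "y \<in> B n l"
      using ret_in_roof[OF xX, of n] unfolding y_def i_def ckr_roof_def by blast
    have "y \<in> ckr_atom X T B n (l, 0)"
      using yX l(2) unfolding ckr_atom_def preim_pow_def by simp
    moreover have "(T ^^ (j - i)) y = (T ^^ (j - i + i)) x"
      by (simp add: y_def funpow_add)
    hence "(T ^^ (j - i)) y = (T ^^ j) x" using lt by simp
    hence "y \<in> ckr_atom X T B n (k, j - i)"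
      using yX xB unfolding ckr_atom_def preim_pow_def by simp
    moreover have "(l, 0) \<in> ckr_index C h n" "(k, j - i) \<in> ckr_index C h n"
      using l(1) base_props(4)[OF l(1)] k lt unfolding ckr_index_def by auto
    moreover have "(l, 0) \<noteq> (k, j - i)" using lt by simp
    ultimately show False using atoms_disjoint[of "(l, 0)" n "(k, j - i)"] by blast
  qed
qed

lemma atom_openin:
  assumes "(k, j) \<in> ckr_index C h n"
  shows "openin (top_of_set X) (ckr_atom X T B n (k, j))"
proof -
  have "openin (top_of_set X) (X \<inter> (T ^^ j) -` B n k)"
  proof (rule continuous_openin_preimage[OF funpow_continuous])
    show "T ^^ j \<in> X \<rightarrow> X" using funpow_in_X by blast
    show "openin (top_of_set X) (B n k)"
      using assms base_props(2) unfolding ckr_index_def by auto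
  qed
  moreover have "X \<inter> (T ^^ j) -` B n k = ckr_atom X T B n (k, j)"
    unfolding ckr_atom_def preim_pow_def by auto
  ultimately show ?thesis by simp
qed

text \<open>Being constant on the clopen atoms, every function of \<open>r\<^sub>n\<close> is continuous.\<close>

lemma ret_continuous: "continuous_on X (\<lambda>x. \<phi> (ret n x))"
proof (rule continuous_on_locally_constant)
  fix x assume "x \<in> X"
  then obtain k j where kj: "(k, j) \<in> ckr_index C h n" "x \<in> ckr_atom X T B n (k, j)"
    by (rule atoms_cover)
  have "\<forall>y\<in>ckr_atom X T B n (k, j). \<phi> (ret n y) = \<phi> (ret n x)"
    using ret_on_atom[OF kj(1)] kj(2) by simp
  thus "\<exists>U. openin (top_of_set X) U \<and> x \<in> U \<and> (\<forall>y\<in>U. \<phi> (ret n y) = \<phi> (ret n x))"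
    using atom_openin[OF kj(1)] kj(2) by blast
qed

end


subsection \<open>Continuous eigenvalues and return times\<close>

context ckr_system
begin

lemma eigenfunction_norm_constant:
  fixes f :: "'a \<Rightarrow> complex"
  assumes "norm lam = 1" "continuous_on X f" "\<And>x. x \<in> X \<Longrightarrow> f (T x) = lam * f x"
    and "x \<in> X" "y \<in> X"
  shows "norm (f x) = norm (f y)"
proof (rule minimal_invariant_function_constant[OF closed_X T_onto minimal _ _ assms(4,5)])
  show "continuous_on X (\<lambda>x. norm (f x))" using assms(2) by (rule continuous_on_norm)
  show "norm (f (T x)) = norm (f x)" if "x \<in> X" for x
    using assms(1) assms(3)[OF that] by (simp add: norm_mult)
qed

lemma eigenfunction_funpow:
  fixes f :: "'a \<Rightarrow> complex"
  assumes "\<And>x. x \<in> X \<Longrightarrow> f (T x) = lam * f x" "x \<in> X"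
  shows "f ((T ^^ j) x) = lam ^ j * f x"
  by (induction j) (simp_all add: assms funpow_in_X)

text \<open>If \<open>f\<close> is an eigenfunction then \<open>\<lambda>\<^bsup>r\<^sub>n(x)\<^esup> = f(T\<^bsup>r\<^sub>n(x)\<^esup>x) / f(x)\<close>, and \<open>T\<^bsup>r\<^sub>n(x)\<^esup>x\<close> lies in the
  roof, which shrinks to \<open>x\<^sub>0\<close>; so \<open>\<lambda>\<^bsup>r\<^sub>n\<^esup>\<close> converges uniformly to \<open>f(x\<^sub>0)/f\<close>.\<close>

lemma eigenvalue_imp_uniformly_convergent:
  assumes "norm lam = 1" "continuous_eigenvalue X T lam"
  shows "uniformly_convergent_on X (\<lambda>n x. lam ^ ret (Suc n) x)"
proof -
  obtain f :: "'a \<Rightarrow> complex" and x1 where f: "continuous_on X f"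
    "\<And>x. x \<in> X \<Longrightarrow> f (T x) = lam * f x" and x1: "x1 \<in> X" "f x1 \<noteq> 0"
    using assms(2) unfolding continuous_eigenvalue_def by blast
  define M where "M = norm (f x1)"
  have M: "M > 0" using x1(2) by (simp add: M_def)
  have norm_f: "norm (f x) = M" if "x \<in> X" for x
    unfolding M_def using eigenfunction_norm_constant[OF assms(1) f that x1(1)] .
  have uc: "uniformly_continuous_on X f"
    by (rule compact_uniformly_continuous[OF f(1) compact_X])
  have "uniform_limit X (\<lambda>n x. lam ^ ret (Suc n) x) (\<lambda>x. f roof_point / f x) sequentially"
    unfolding uniform_limit_iff eventually_sequentially
  proof (intro allI impI)
    fix e :: real assume "e > 0"
    then obtain d where d: "d > 0"
      "\<And>x y. x \<in> X \<Longrightarrow> y \<in> X \<Longrightarrow> dist y x < d \<Longrightarrow> dist (f y) (f x) < e * M"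
      using uc M unfolding uniformly_continuous_on_def by (metis mult_pos_pos)
    obtain N where N: "\<And>n. n \<ge> N \<Longrightarrow> roof n \<subseteq> ball roof_point d"
      using roofs_shrink[OF d(1)] by blast
    have "dist (lam ^ ret (Suc n) x) (f roof_point / f x) < e" if "n \<ge> N" "x \<in> X" for n x
    proof -
      define y where "y = (T ^^ ret (Suc n) x) x"
      have y_roof: "y \<in> roof (Suc n)" unfolding y_def by (rule ret_in_roof[OF \<open>x \<in> X\<close>])
      hence "dist y roof_point < d" using N[of "Suc n"] \<open>n \<ge> N\<close> by (auto simp: dist_commute)
      hence close: "dist (f y) (f roof_point) < e * M"
        using d(2) roof_point_in_X y_roof roof_subset by blast
      have fx: "f x \<noteq> 0" using norm_f[OF \<open>x \<in> X\<close>] M by auto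
      have "lam ^ ret (Suc n) x = f y / f x"
        using eigenfunction_funpow[where f = f, OF f(2) \<open>x \<in> X\<close>] fx by (simp add: y_def)
      hence "dist (lam ^ ret (Suc n) x) (f roof_point / f x) = dist (f y) (f roof_point) / M"
        using norm_f[OF \<open>x \<in> X\<close>] by (simp add: dist_norm diff_divide_distrib[symmetric] norm_divide)
      also have "\<dots> < e" using close M by (simp add: divide_less_eq)
      finally show ?thesis .
    qed
    thus "\<exists>N. \<forall>n\<ge>N. \<forall>x\<in>X. dist (lam ^ ret (Suc n) x) (f roof_point / f x) < e" by blast
  qed
  thus ?thesis unfolding uniformly_convergent_on_def by blast
qed

text \<open>Off \<open>x\<^sub>0\<close> a point leaves the roofs eventually, and then \<open>r\<^sub>n(x) = r\<^sub>n(T x) + 1\<close>; so a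
  pointwise limit \<open>g\<close> of \<open>\<lambda>\<^bsup>r\<^sub>n\<^esup>\<close> satisfies \<open>g(T x) \<lambda> = g(x)\<close> for \<open>x \<noteq> x\<^sub>0\<close>.\<close>

lemma limit_twisted_invariant:
  fixes lam :: complex and g :: "'a \<Rightarrow> complex"
  assumes lim: "\<And>x. x \<in> X \<Longrightarrow> (\<lambda>n. lam ^ ret (Suc n) x) \<longlonglongrightarrow> g x"
    and x: "x \<in> X" "x \<noteq> roof_point"
  shows "g (T x) * lam = g x"
proof -
  have Tx: "T x \<in> X" using T_onto x(1) by blast
  obtain m where m: "x \<notin> roof m" using roof_Inter x by blast
  have "\<forall>\<^sub>F n in sequentially. lam ^ ret (Suc n) (T x) * lam = lam ^ ret (Suc n) x"
    unfolding eventually_sequentially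
  proof (intro exI allI impI)
    fix n assume "m \<le> n"
    hence "x \<notin> roof (Suc n)" using m decseqD[OF roof_decseq, of m "Suc n"] by auto
    hence "ret (Suc n) x = Suc (ret (Suc n) (T x))" by (rule ret_off_roof[OF x(1)])
    hence "lam ^ ret (Suc n) x = lam ^ Suc (ret (Suc n) (T x))" by (rule arg_cong)
    also have "\<dots> = lam ^ ret (Suc n) (T x) * lam" by (rule power_Suc2)
    finally show "lam ^ ret (Suc n) (T x) * lam = lam ^ ret (Suc n) x" by (rule sym)
  qed
  moreover have "(\<lambda>n. lam ^ ret (Suc n) (T x) * lam) \<longlonglongrightarrow> g (T x) * lam"
    by (intro tendsto_mult_right lim Tx)
  ultimately have "(\<lambda>n. lam ^ ret (Suc n) x) \<longlonglongrightarrow> g (T x) * lam"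
    by (rule Lim_transform_eventually[rotated])
  thus ?thesis using lim[OF x(1)] LIMSEQ_unique by blast
qed

text \<open>Conversely, the uniform limit \<open>g\<close> of the continuous functions \<open>\<lambda>\<^bsup>r\<^sub>n\<^esup>\<close> is continuous and
  unimodular, and \<open>g(T x) \<lambda> = g(x)\<close> extends to \<open>x\<^sub>0\<close> as \<open>X\<close> is perfect; \<open>1/g\<close> is an
  eigenfunction.\<close>

lemma uniformly_convergent_imp_eigenvalue:
  assumes lam: "norm lam = 1"
    and conv: "uniformly_convergent_on X (\<lambda>n x. lam ^ ret (Suc n) x)"
  shows "continuous_eigenvalue X T lam"
proof -
  obtain g where g_lim: "uniform_limit X (\<lambda>n x. lam ^ ret (Suc n) x) g sequentially"
    using conv unfolding uniformly_convergent_on_def by blast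
  have g_cont: "continuous_on X g"
    by (rule uniform_limit_theorem[OF _ g_lim]) (simp_all add: ret_continuous)
  have g_norm: "norm (g x) = 1" if "x \<in> X" for x
    by (rule uniform_limit_unimodular[OF g_lim _ that]) (simp add: norm_power lam)
  have off_point: "g (T x) * lam = g x" if "x \<in> X" "x \<noteq> roof_point" for x
    using limit_twisted_invariant[OF tendsto_uniform_limitI[OF g_lim] that] .
  have at_point: "g (T roof_point) * lam = g roof_point"
  proof (rule continuous_on_eq_at_limit_point[OF _ g_cont roof_point_in_X perfect_X[OF roof_point_in_X]])
    show "continuous_on X (\<lambda>x. g (T x) * lam)"
      by (intro continuous_intros continuous_on_compose2[OF g_cont T_continuous])
         (use T_onto in blast)
  qed (rule off_point)
  have g_eq: "g (T x) * lam = g x" if "x \<in> X" for x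
    using off_point[OF that] at_point by (cases "x = roof_point") auto
  have g_nonzero: "g x \<noteq> 0" if "x \<in> X" for x
    using g_norm[OF that] by auto
  obtain x1 where "x1 \<in> X" using perfect_X roof_point_in_X by blast
  show ?thesis
    unfolding continuous_eigenvalue_def
  proof (intro exI[of _ "\<lambda>x. inverse (g x)"] conjI ballI bexI)
    show "continuous_on X (\<lambda>x. inverse (g x))"
      using g_cont g_nonzero by (intro continuous_on_inverse) auto
    show "inverse (g x1) \<noteq> 0" using g_nonzero[OF \<open>x1 \<in> X\<close>] by simp
    show "x1 \<in> X" by fact
  next
    fix x assume "x \<in> X"
    hence "T x \<in> X" using T_onto by blast
    moreover have "lam \<noteq> 0" using lam by auto
    ultimately show "inverse (g (T x)) = lam * inverse (g x)"
      using g_eq[OF \<open>x \<in> X\<close>] g_nonzero by (auto simp: field_simps)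
  qed
qed

end

theorem mainTheorem8:
  fixes X :: "'a::metric_space set" and T :: "'a \<Rightarrow> 'a"
    and C :: "nat \<Rightarrow> nat" and h :: "nat \<Rightarrow> nat \<Rightarrow> nat" and B :: "nat \<Rightarrow> nat \<Rightarrow> 'a set"
    and \<alpha> :: real and lam :: complex
  assumes "minimal_cantor_system X T"
    and "ckr_sequence X T C h B"
    and "lam = exp (2 * complex_of_real pi * \<i> * complex_of_real \<alpha>)"
  shows "(continuous_eigenvalue X T lam \<longleftrightarrow>
           uniformly_convergent_on X (\<lambda>n x. lam ^ ckr_return T C B (Suc n) x))
       \<and> (uniformly_convergent_on X (\<lambda>n x. lam ^ ckr_return T C B (Suc n) x) \<longleftrightarrow>
           unif_conv_mod_Z X (\<lambda>n x. \<alpha> * real (ckr_return T C B (Suc n) x)))"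
proof -
  interpret ckr_system X T C h B using assms(1,2) by unfold_locales
  have lam_cis: "lam = cis (2 * pi * \<alpha>)" using assms(3) exp_two_pi_eq_cis by simp
  have lam_pow: "lam ^ k = cis (2 * pi * (\<alpha> * real k))" for k
  proof -
    have "lam ^ k = cis (real k * (2 * pi * \<alpha>))" unfolding lam_cis by (rule Complex.DeMoivre)
    thus ?thesis by (simp add: mult_ac)
  qed
  have norm_lam: "norm lam = 1" using lam_pow[of 1] by simp
  have "uniformly_convergent_on X (\<lambda>n x. lam ^ ret (Suc n) x)
      \<longleftrightarrow> unif_conv_mod_Z X (\<lambda>n x. \<alpha> * real (ret (Suc n) x))"
    unfolding lam_pow by (rule cis_convergent_iff_unif_conv_mod_Z)
  thus ?thesis
    using eigenvalue_imp_uniformly_convergent[OF norm_lam]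
      uniformly_convergent_imp_eigenvalue[OF norm_lam] by blast
qed

end
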